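(* Let $\Gamma((r^S)_{S\subseteq I})$ be a quitting game satisfying $r^i_i=0$ for all $i\in I$. If there is a normal player $i\in I_*$ such that $r^i\in\mathbb R^N_{\ge0}$, then for every $\varepsilon>0$ the game has a stationary $\varepsilon$-equilibrium.
   Context: A quitting game $\Gamma((r^S)_{S\subseteq I})$: finite player set $I=[N]$, vectors $r^S\in[-1,1]^N$ for all $S\subseteq I$; at each stage $t\in\mathbb N$ each player chooses to continue or quit; with $t^*$ the first stage at which some player quits and $S^*$ the set of players quitting then ($S^*=\emptyset$ if nobody ever quits), the payoff is $r^{S^*}$. Write $r^i:=r^{\{i\}}$. A (behavior) strategy of player $i$ is a sequence $x_i=(x_i^t)_{t\in\mathbb N}\subset[0,1]$, $x_i^t$ being the probability of quitting at stage $t$ if nobody quit before; it is stationary if $x_i^t$ does not depend on $t$. $\gamma(x):=\mathbb E_x[r^{S^*}]$. A profile $x$ is an $\varepsilon$-equilibrium if $\gamma_i(x)\ge\gamma_i(x_i',x_{-i})-\varepsilon$ for all $i$ and all strategies $x_i'$. Normal players: $I_0:=I$, $I_{l+1}:=\{i\in I_l:\ \exists j\in I_l,\ j\neq i,\ r^j_i\le0\}$, and $I_*:=\bigcap_{l}I_l$. Players in $I_*$ are normal, the others abnormal. *)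

theory Defs
  imports "HOL-Analysis.Analysis"
begin

text \<open>Payoff vectors: r S i is the payoff of player i when exactly the set S quits first
  (S = {} means nobody ever quits).  A strategy profile x assigns to player j and
  stage t the probability x j t of quitting at stage t (if nobody quit before).\<close>

definition players :: "nat \<Rightarrow> nat set" where
  "players N = {..<N}"

definition valid_game :: "nat \<Rightarrow> (nat set \<Rightarrow> nat \<Rightarrow> real) \<Rightarrow> bool" where
  "valid_game N r \<longleftrightarrow> (\<forall>S\<subseteq>players N. \<forall>i\<in>players N. \<bar>r S i\<bar> \<le> 1)"

definition is_strategy :: "(nat \<Rightarrow> real) \<Rightarrow> bool" where
  "is_strategy y \<longleftrightarrow> (\<forall>t. 0 \<le> y t \<and> y t \<le> 1)"

definition is_profile :: "nat \<Rightarrow> (nat \<Rightarrow> nat \<Rightarrow> real) \<Rightarrow> bool" where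
  "is_profile N x \<longleftrightarrow> (\<forall>j\<in>players N. is_strategy (x j))"

definition stationary_profile :: "nat \<Rightarrow> (nat \<Rightarrow> nat \<Rightarrow> real) \<Rightarrow> bool" where
  "stationary_profile N x \<longleftrightarrow> (\<forall>j\<in>players N. \<forall>t. x j t = x j 0)"

definition no_quit_before :: "nat \<Rightarrow> (nat \<Rightarrow> nat \<Rightarrow> real) \<Rightarrow> nat \<Rightarrow> real" where
  "no_quit_before N x t = (\<Prod>s<t. \<Prod>j\<in>players N. (1 - x j s))"

definition quit_exactly :: "nat \<Rightarrow> (nat \<Rightarrow> nat \<Rightarrow> real) \<Rightarrow> nat set \<Rightarrow> nat \<Rightarrow> real" where
  "quit_exactly N x S t = (\<Prod>j\<in>S. x j t) * (\<Prod>j\<in>players N - S. (1 - x j t))"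

definition payoff :: "nat \<Rightarrow> (nat set \<Rightarrow> nat \<Rightarrow> real) \<Rightarrow> (nat \<Rightarrow> nat \<Rightarrow> real) \<Rightarrow> nat \<Rightarrow> real" where
  "payoff N r x i =
     (\<Sum>t. no_quit_before N x t * (\<Sum>S\<in>Pow (players N) - {{}}. quit_exactly N x S t * r S i))
     + lim (\<lambda>t. no_quit_before N x t) * r {} i"

definition eps_equilibrium :: "nat \<Rightarrow> (nat set \<Rightarrow> nat \<Rightarrow> real) \<Rightarrow> real \<Rightarrow> (nat \<Rightarrow> nat \<Rightarrow> real) \<Rightarrow> bool" where
  "eps_equilibrium N r \<epsilon> x \<longleftrightarrow> is_profile N x \<and>
     (\<forall>i\<in>players N. \<forall>y. is_strategy y \<longrightarrow> payoff N r x i \<ge> payoff N r (x(i := y)) i - \<epsilon>)"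

fun normal_iter :: "nat \<Rightarrow> (nat set \<Rightarrow> nat \<Rightarrow> real) \<Rightarrow> nat \<Rightarrow> nat set" where
  "normal_iter N r 0 = players N"
| "normal_iter N r (Suc l) = {i \<in> normal_iter N r l. \<exists>j\<in>normal_iter N r l. j \<noteq> i \<and> r {j} i \<le> 0}"

definition normal_players :: "nat \<Rightarrow> (nat set \<Rightarrow> nat \<Rightarrow> real) \<Rightarrow> nat set" where
  "normal_players N r = (\<Inter>l. normal_iter N r l)"

end

theory Submission
  imports Defs
begin

text \<open>
  Take a normal player \<open>i\<close> with \<open>r\<^sup>i \<ge> 0\<close>; since \<open>i \<in> I\<^sub>1\<close> there is a player
  \<open>j \<noteq> i\<close> with \<open>r\<^sup>j\<^sub>i \<le> 0\<close>. In the stationary profile where \<open>i\<close> quits with probability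
  \<open>\<delta>\<close>, \<open>j\<close> with probability \<open>\<eta>\<close> much smaller than \<open>\<delta>\<close> and nobody else ever quits, the game ends with
  \<open>i\<close> quitting alone up to an error \<open>O(\<eta>/\<delta>)\<close>, so every player \<open>m\<close> gets about
  \<open>r\<^sup>i\<^sub>m\<close>. A deviating player \<open>m \<noteq> i\<close> gains nothing by quitting alone
  (\<open>r\<^sup>m\<^sub>m = 0 \<le> r\<^sup>i\<^sub>m\<close>), so she gets at most \<open>r\<^sup>i\<^sub>m + \<delta> + \<eta>/\<delta>\<close>; a deviating
  \<open>i\<close> gets \<open>0\<close> or \<open>r\<^sup>j\<^sub>i \<le> 0\<close> unless both quit at once, hence at most \<open>\<eta>\<close>.

  These bounds are proved stage by stage: when play ends almost surely, the probabilities
  that play stops at the individual stages sum to \<open>1\<close>, so an estimate of the expected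
  stage payoff by \<open>C\<close> times the stopping probability at every stage gives the same
  estimate \<open>C\<close> for the payoff.
\<close>

definition quit_prob :: "(nat \<Rightarrow> nat \<Rightarrow> real) \<Rightarrow> nat set \<Rightarrow> nat \<Rightarrow> real" where
  "quit_prob x A t = 1 - (\<Prod>l\<in>A. 1 - x l t)"

definition stage_payoff ::
    "nat \<Rightarrow> (nat set \<Rightarrow> nat \<Rightarrow> real) \<Rightarrow> (nat \<Rightarrow> nat \<Rightarrow> real) \<Rightarrow> nat \<Rightarrow> nat \<Rightarrow> real" where
  "stage_payoff N r x i t = (\<Sum>S\<in>Pow (players N) - {{}}. quit_exactly N x S t * r S i)"

lemma finite_players [simp]: "finite (players N)"
  by (simp add: players_def)

lemma is_profileD:
  assumes "is_profile N x" "l \<in> players N"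
  shows "0 \<le> x l t" "x l t \<le> 1"
  using assms by (auto simp: is_profile_def is_strategy_def)

lemma is_profile_update:
  assumes "is_profile N x" "is_strategy y"
  shows "is_profile N (x(i := y))"
  using assms by (auto simp: is_profile_def)

lemma valid_gameD:
  assumes "valid_game N r" "S \<subseteq> players N" "i \<in> players N"
  shows "-1 \<le> r S i" "r S i \<le> 1"
  using assms by (auto simp: valid_game_def abs_le_iff)

lemma prod_one_minus_bounds:
  assumes "is_profile N x" "A \<subseteq> players N"
  shows "0 \<le> (\<Prod>l\<in>A. 1 - x l t)" "(\<Prod>l\<in>A. 1 - x l t) \<le> 1"
  using assms is_profileD[OF assms(1)] by (auto intro!: prod_nonneg prod_le_1)

lemma quit_prob_nonneg:
  assumes "is_profile N x" "A \<subseteq> players N"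
  shows "0 \<le> quit_prob x A t"
  using prod_one_minus_bounds[OF assms] by (simp add: quit_prob_def)

lemma le_quit_prob:
  assumes "is_profile N x" "A \<subseteq> players N" "a \<in> A"
  shows "x a t \<le> quit_prob x A t"
proof -
  have "finite A" using assms(2) by (rule finite_subset) simp
  then have "(\<Prod>l\<in>A. 1 - x l t) = (1 - x a t) * (\<Prod>l\<in>A - {a}. 1 - x l t)"
    using assms(3) by (simp add: prod.remove)
  also have "\<dots> \<le> 1 - x a t"
  proof (rule mult_left_le)
    show "(\<Prod>l\<in>A - {a}. 1 - x l t) \<le> 1"
      using prod_one_minus_bounds(2)[OF assms(1)] assms(2) by blast
    show "0 \<le> 1 - x a t" using is_profileD(2)[OF assms(1)] assms(2,3) by auto
  qed
  finally show ?thesis by (simp add: quit_prob_def)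
qed

lemma quit_prob_le_sum:
  assumes "is_profile N x" "A \<subseteq> players N"
  shows "quit_prob x A t \<le> (\<Sum>l\<in>A. x l t)"
proof -
  have "finite A" using assms(2) by (rule finite_subset) simp
  then show ?thesis using assms(2)
  proof (induction A rule: finite_induct)
    case empty
    then show ?case by (simp add: quit_prob_def)
  next
    case (insert a A)
    let ?P = "\<Prod>l\<in>A. 1 - x l t"
    have P: "0 \<le> ?P" "?P \<le> 1" using prod_one_minus_bounds[OF assms(1)] insert.prems by auto
    have a: "0 \<le> x a t" using is_profileD[OF assms(1)] insert.prems by auto
    have "quit_prob x (insert a A) t = quit_prob x A t + x a t * ?P"
      using insert.hyps by (simp add: quit_prob_def algebra_simps)
    also have "\<dots> \<le> (\<Sum>l\<in>A. x l t) + x a t"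
      using insert P a by (intro add_mono mult_left_le) auto
    finally show ?case using insert.hyps by simp
  qed
qed

lemma quit_prob_update_outside [simp]:
  "m \<notin> A \<Longrightarrow> quit_prob (x(m := y)) A t = quit_prob x A t"
  unfolding quit_prob_def by (rule arg_cong[where f = "\<lambda>p. 1 - p"]) (rule prod.cong, auto)

lemma quit_exactly_nonneg:
  assumes "is_profile N x" "S \<subseteq> players N"
  shows "0 \<le> quit_exactly N x S t"
  using assms is_profileD[OF assms(1)] unfolding quit_exactly_def
  by (intro mult_nonneg_nonneg prod_nonneg) auto

lemma sum_quit_exactly:
  "(\<Sum>S\<in>Pow (players N) - {{}}. quit_exactly N x S t) = quit_prob x (players N) t"
proof -
  have "(\<Sum>S\<in>Pow (players N). quit_exactly N x S t) = (\<Prod>l\<in>players N. x l t + (1 - x l t))"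
    unfolding quit_exactly_def
    using prod_add[of "players N" "\<lambda>l. x l t" "\<lambda>l. 1 - x l t"] by simp
  moreover have "(\<Sum>S\<in>Pow (players N). quit_exactly N x S t) =
      quit_exactly N x {} t + (\<Sum>S\<in>Pow (players N) - {{}}. quit_exactly N x S t)"
    by (rule sum.remove) auto
  ultimately show ?thesis by (simp add: quit_exactly_def quit_prob_def)
qed

lemma quit_prob_minus_single:
  assumes "a \<in> players N"
  shows "quit_prob x (players N) t - quit_exactly N x {a} t = quit_prob x (players N - {a}) t"
  using assms by (simp add: quit_prob_def quit_exactly_def prod.remove algebra_simps)

text \<open>A coalition other than \<open>{a}\<close> and \<open>{b}\<close> quits iff someone outside \<open>{a, b}\<close> quits,
  or \<open>a\<close> and \<open>b\<close> both quit while nobody outside does.\<close>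

lemma quit_prob_minus_pair:
  assumes "a \<in> players N" "b \<in> players N" "a \<noteq> b"
  shows "quit_prob x (players N) t - quit_exactly N x {a} t - quit_exactly N x {b} t
    = quit_prob x (players N - {a, b}) t + x a t * x b t * (\<Prod>l\<in>players N - {a, b}. 1 - x l t)"
proof -
  let ?R = "\<Prod>l\<in>players N - {a, b}. 1 - x l t"
  have remove_other: "(\<Prod>l\<in>players N - {c}. 1 - x l t) = (1 - x d t) * ?R"
    if "{c, d} = {a, b}" "c \<noteq> d" for c d
  proof -
    have "d \<in> players N - {c}" using that assms by auto
    then have "(\<Prod>l\<in>players N - {c}. 1 - x l t)
        = (1 - x d t) * (\<Prod>l\<in>players N - {c} - {d}. 1 - x l t)"
      by (simp add: prod.remove)
    also have "players N - {c} - {d} = players N - {a, b}" using that by auto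
    finally show ?thesis .
  qed
  have Pa: "(\<Prod>l\<in>players N - {a}. 1 - x l t) = (1 - x b t) * ?R"
    and Pb: "(\<Prod>l\<in>players N - {b}. 1 - x l t) = (1 - x a t) * ?R"
    using remove_other[of a b] remove_other[of b a] assms(3) by auto
  have P: "(\<Prod>l\<in>players N. 1 - x l t) = (1 - x a t) * (1 - x b t) * ?R"
    using assms(1) Pa by (simp add: prod.remove)
  show ?thesis
    unfolding quit_prob_def quit_exactly_def by (simp add: P Pa Pb) (simp add: algebra_simps)
qed

lemma stage_payoff_abs_le:
  assumes "valid_game N r" "is_profile N x" "i \<in> players N"
  shows "\<bar>stage_payoff N r x i t\<bar> \<le> quit_prob x (players N) t"
proof -
  have "\<bar>stage_payoff N r x i t\<bar> \<le> (\<Sum>S\<in>Pow (players N) - {{}}. \<bar>quit_exactly N x S t * r S i\<bar>)"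
    unfolding stage_payoff_def by (rule sum_abs)
  also have "\<dots> \<le> (\<Sum>S\<in>Pow (players N) - {{}}. quit_exactly N x S t)"
  proof (rule sum_mono)
    fix S assume "S \<in> Pow (players N) - {{}}"
    with assms show "\<bar>quit_exactly N x S t * r S i\<bar> \<le> quit_exactly N x S t"
      using quit_exactly_nonneg valid_gameD
      by (auto simp: abs_mult abs_le_iff intro!: mult_left_le)
  qed
  finally show ?thesis by (simp add: sum_quit_exactly)
qed

lemma stage_payoff_ge:
  assumes "valid_game N r" "is_profile N x" "i \<in> players N" "a \<in> players N"
  shows "quit_exactly N x {a} t * r {a} i - quit_prob x (players N - {a}) t
    \<le> stage_payoff N r x i t"
proof -
  let ?C = "Pow (players N) - {{}}"
  let ?q = "\<lambda>S. quit_exactly N x S t"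
  have a: "{a} \<in> ?C" using assms(4) by auto
  have "(\<Sum>S\<in>?C - {{a}}. - ?q S) \<le> (\<Sum>S\<in>?C - {{a}}. ?q S * r S i)"
  proof (rule sum_mono)
    fix S assume "S \<in> ?C - {{a}}"
    then have "0 \<le> ?q S" "-1 \<le> r S i"
      using quit_exactly_nonneg[OF assms(2)] valid_gameD[OF assms(1) _ assms(3)] by auto
    then show "- ?q S \<le> ?q S * r S i"
      using mult_left_mono[of "-1" "r S i" "?q S"] by simp
  qed
  moreover have "(\<Sum>S\<in>?C - {{a}}. ?q S) = quit_prob x (players N - {a}) t"
    using sum.remove[OF _ a, of ?q] sum_quit_exactly[of N x t]
      quit_prob_minus_single[OF assms(4), of x t] by simp
  ultimately show ?thesis
    using sum.remove[OF _ a, of "\<lambda>S. ?q S * r S i"] unfolding stage_payoff_def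
    by (simp add: sum_negf)
qed

lemma stage_payoff_le:
  assumes "valid_game N r" "is_profile N x" "i \<in> players N"
    and "a \<in> players N" "b \<in> players N" "a \<noteq> b"
  shows "stage_payoff N r x i t
    \<le> quit_exactly N x {a} t * r {a} i + quit_exactly N x {b} t * r {b} i
      + quit_prob x (players N - {a, b}) t + x a t * x b t"
proof -
  let ?C = "Pow (players N) - {{}}"
  let ?q = "\<lambda>S. quit_exactly N x S t"
  have split: "sum f ?C = f {a} + f {b} + sum f (?C - {{a}} - {{b}})" for f :: "nat set \<Rightarrow> real"
  proof -
    have "{a} \<in> ?C" "{b} \<in> ?C - {{a}}" using assms(4-6) by auto
    then show ?thesis by (simp add: sum.remove[of ?C "{a}"] sum.remove[of "?C - {{a}}" "{b}"])
  qed
  have rest: "(\<Sum>S\<in>?C - {{a}} - {{b}}. ?q S * r S i) \<le> (\<Sum>S\<in>?C - {{a}} - {{b}}. ?q S)"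
  proof (rule sum_mono)
    fix S assume "S \<in> ?C - {{a}} - {{b}}"
    then have "0 \<le> ?q S" "r S i \<le> 1"
      using quit_exactly_nonneg[OF assms(2)] valid_gameD[OF assms(1) _ assms(3)] by auto
    then show "?q S * r S i \<le> ?q S"
      using mult_left_mono[of "r S i" 1 "?q S"] by simp
  qed
  have "(\<Sum>S\<in>?C - {{a}} - {{b}}. ?q S) = quit_prob x (players N - {a, b}) t
      + x a t * x b t * (\<Prod>l\<in>players N - {a, b}. 1 - x l t)"
    using split[of ?q] sum_quit_exactly[of N x t] quit_prob_minus_pair[OF assms(4-6), of x t]
    by simp
  also have "\<dots> \<le> quit_prob x (players N - {a, b}) t + x a t * x b t"
    using assms(2,4,5) is_profileD prod_one_minus_bounds[OF assms(2), of "players N - {a, b}" t]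
    by (auto intro!: mult_left_le mult_nonneg_nonneg)
  finally show ?thesis
    using rest split[of "\<lambda>S. ?q S * r S i"] unfolding stage_payoff_def by linarith
qed

lemma no_quit_before_Suc:
  "no_quit_before N x (Suc t) = no_quit_before N x t * (1 - quit_prob x (players N) t)"
  by (simp add: no_quit_before_def quit_prob_def)

lemma no_quit_before_nonneg:
  assumes "is_profile N x"
  shows "0 \<le> no_quit_before N x t"
  unfolding no_quit_before_def
  by (rule prod_nonneg) (use prod_one_minus_bounds(1)[OF assms order_refl] in blast)

lemma no_quit_before_tendsto_zero:
  assumes "is_profile N x" "a \<in> players N" "0 < c" "\<And>t. c \<le> x a t"
  shows "no_quit_before N x \<longlonglongrightarrow> 0"
proof (rule tendsto_sandwich[of "\<lambda>_. 0" _ _ "\<lambda>t. (1 - c) ^ t"])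
  have "(\<Prod>l\<in>players N. 1 - x l s) \<le> 1 - c" for s
    using le_quit_prob[OF assms(1) _ assms(2), of s] assms(4)[of s] by (simp add: quit_prob_def)
  then have "(\<Prod>s<t. \<Prod>l\<in>players N. 1 - x l s) \<le> (\<Prod>s<t. 1 - c)" for t
    using prod_one_minus_bounds[OF assms(1)] by (intro prod_mono) auto
  then show "\<forall>\<^sub>F t in sequentially. no_quit_before N x t \<le> (1 - c) ^ t"
    by (simp add: no_quit_before_def)
  have "c \<le> 1" using assms(4)[of 0] is_profileD(2)[OF assms(1,2), of 0] by linarith
  then show "(\<lambda>t. (1 - c) ^ t) \<longlonglongrightarrow> 0"
    using assms(3) by (intro LIMSEQ_power_zero) simp
  show "\<forall>\<^sub>F t in sequentially. 0 \<le> no_quit_before N x t"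
    using no_quit_before_nonneg[OF assms(1)] by simp
qed simp

lemma stage_weights_sums:
  assumes "no_quit_before N x \<longlonglongrightarrow> 0"
  shows "(\<lambda>t. no_quit_before N x t * quit_prob x (players N) t) sums 1"
proof -
  have "(\<lambda>t. no_quit_before N x t - no_quit_before N x (Suc t)) sums (no_quit_before N x 0 - 0)"
    by (rule telescope_sums'[OF assms])
  moreover have "no_quit_before N x 0 = 1" by (simp add: no_quit_before_def)
  ultimately show ?thesis by (simp add: no_quit_before_Suc algebra_simps)
qed

lemma payoff_sums:
  assumes "valid_game N r" "is_profile N x" "i \<in> players N" "no_quit_before N x \<longlonglongrightarrow> 0"
  shows "(\<lambda>t. no_quit_before N x t * stage_payoff N r x i t) sums payoff N r x i"
proof -
  have "summable (\<lambda>t. no_quit_before N x t * stage_payoff N r x i t)"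
  proof (rule summable_comparison_test)
    show "summable (\<lambda>t. no_quit_before N x t * quit_prob x (players N) t)"
      using stage_weights_sums[OF assms(4)] by (simp add: sums_iff)
    show "\<exists>M. \<forall>t\<ge>M. norm (no_quit_before N x t * stage_payoff N r x i t)
        \<le> no_quit_before N x t * quit_prob x (players N) t"
      using stage_payoff_abs_le[OF assms(1-3)] no_quit_before_nonneg[OF assms(2)]
      by (auto simp: abs_mult intro!: mult_left_mono)
  qed
  moreover have "payoff N r x i = (\<Sum>t. no_quit_before N x t * stage_payoff N r x i t)"
    using limI[OF assms(4)] by (simp add: payoff_def stage_payoff_def)
  ultimately show ?thesis by (simp add: sums_iff)
qed

lemma payoff_le_if_stage_payoff_le:
  assumes "valid_game N r" "is_profile N x" "i \<in> players N" "no_quit_before N x \<longlonglongrightarrow> 0"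
    and "\<And>t. stage_payoff N r x i t \<le> C * quit_prob x (players N) t"
  shows "payoff N r x i \<le> C"
proof (rule sums_le[OF _ payoff_sums[OF assms(1-4)]])
  show "(\<lambda>t. no_quit_before N x t * (C * quit_prob x (players N) t)) sums C"
    using sums_mult[OF stage_weights_sums[OF assms(4)], of C] by (simp add: algebra_simps)
qed (use assms(5) no_quit_before_nonneg[OF assms(2)] in \<open>auto intro: mult_left_mono\<close>)

lemma payoff_ge_if_stage_payoff_ge:
  assumes "valid_game N r" "is_profile N x" "i \<in> players N" "no_quit_before N x \<longlonglongrightarrow> 0"
    and "\<And>t. C * quit_prob x (players N) t \<le> stage_payoff N r x i t"
  shows "C \<le> payoff N r x i"
proof (rule sums_le[OF _ _ payoff_sums[OF assms(1-4)]])
  show "(\<lambda>t. no_quit_before N x t * (C * quit_prob x (players N) t)) sums C"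
    using sums_mult[OF stage_weights_sums[OF assms(4)], of C] by (simp add: algebra_simps)
qed (use assms(5) no_quit_before_nonneg[OF assms(2)] in \<open>auto intro: mult_left_mono\<close>)

definition two_quitter_profile :: "nat \<Rightarrow> nat \<Rightarrow> real \<Rightarrow> real \<Rightarrow> nat \<Rightarrow> nat \<Rightarrow> real" where
  "two_quitter_profile i j \<delta> \<eta> = (\<lambda>l t. if l = i then \<delta> else if l = j then \<eta> else 0)"

context
  fixes N :: nat and r :: "nat set \<Rightarrow> nat \<Rightarrow> real" and i j :: nat and \<delta> \<eta> :: real
  assumes valid: "valid_game N r"
    and i: "i \<in> players N" and j: "j \<in> players N" and ij: "i \<noteq> j"
    and \<eta>_pos: "0 < \<eta>" and \<eta>_le_\<delta>: "\<eta> \<le> \<delta>" and \<delta>_le_1: "\<delta> \<le> 1"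
begin

lemma two_quitter_is_profile: "is_profile N (two_quitter_profile i j \<delta> \<eta>)"
  using \<eta>_pos \<eta>_le_\<delta> \<delta>_le_1
  by (simp add: is_profile_def is_strategy_def two_quitter_profile_def)

lemma two_quitter_quit_prob_le:
  assumes "A \<subseteq> players N" "i \<notin> A"
  shows "quit_prob (two_quitter_profile i j \<delta> \<eta>) A t \<le> (if j \<in> A then \<eta> else 0)"
proof -
  have "quit_prob (two_quitter_profile i j \<delta> \<eta>) A t
      \<le> (\<Sum>l\<in>A. two_quitter_profile i j \<delta> \<eta> l t)"
    by (rule quit_prob_le_sum[OF two_quitter_is_profile assms(1)])
  also have "\<dots> = (\<Sum>l\<in>A. if l = j then \<eta> else 0)"
    using assms(2) by (intro sum.cong) (auto simp: two_quitter_profile_def)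
  also have "\<dots> = (if j \<in> A then \<eta> else 0)"
  proof -
    have "finite A" using assms(1) by (rule finite_subset) simp
    then show ?thesis by simp
  qed
  finally show ?thesis .
qed

lemma two_quitter_payoff_ge:
  assumes m: "m \<in> players N" and r_nonneg: "0 \<le> r {i} m"
  shows "r {i} m - 2 * \<eta> / \<delta> \<le> payoff N r (two_quitter_profile i j \<delta> \<eta>) m"
proof -
  let ?x = "two_quitter_profile i j \<delta> \<eta>"
  have \<delta>_pos: "0 < \<delta>" using \<eta>_pos \<eta>_le_\<delta> by linarith
  have r_le_1: "r {i} m \<le> 1" using valid_gameD[OF valid _ m, of "{i}"] i by simp
  show ?thesis
  proof (rule payoff_ge_if_stage_payoff_ge[OF valid two_quitter_is_profile m])
    show "no_quit_before N ?x \<longlonglongrightarrow> 0"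
      by (rule no_quit_before_tendsto_zero[OF two_quitter_is_profile i \<delta>_pos])
        (simp add: two_quitter_profile_def)
    fix t
    let ?q = "quit_prob ?x (players N) t" and ?d = "quit_prob ?x (players N - {i}) t"
    have d: "0 \<le> ?d" "?d \<le> \<eta>"
      using quit_prob_nonneg[OF two_quitter_is_profile, of "players N - {i}"]
        two_quitter_quit_prob_le[of "players N - {i}" t] \<eta>_pos by (auto split: if_splits)
    have "\<delta> \<le> ?q" using le_quit_prob[OF two_quitter_is_profile order_refl i, of t]
      by (simp add: two_quitter_profile_def)
    then have "2 * \<eta> \<le> 2 * \<eta> / \<delta> * ?q" using \<delta>_pos \<eta>_pos by (simp add: field_simps)
    moreover have "quit_exactly N ?x {i} t = ?q - ?d"
      using quit_prob_minus_single[OF i, of ?x t] by linarith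
    then have "(?q - ?d) * r {i} m - ?d \<le> stage_payoff N r ?x m t"
      using stage_payoff_ge[OF valid two_quitter_is_profile m i, of t] by simp
    moreover have "?d * r {i} m \<le> \<eta>"
      using mult_left_mono[OF r_le_1 d(1)] d(2) by simp
    moreover have "(?q - ?d) * r {i} m = r {i} m * ?q - ?d * r {i} m"
      and "(r {i} m - 2 * \<eta> / \<delta>) * ?q = r {i} m * ?q - 2 * \<eta> / \<delta> * ?q"
      by (simp_all add: algebra_simps)
    ultimately show "(r {i} m - 2 * \<eta> / \<delta>) * ?q \<le> stage_payoff N r ?x m t"
      using d by linarith
  qed
qed

lemma two_quitter_deviation_payoff_le_self:
  assumes r_ii: "r {i} i = 0" and r_ji: "r {j} i \<le> 0" and y: "is_strategy y"
  shows "payoff N r ((two_quitter_profile i j \<delta> \<eta>)(i := y)) i \<le> \<eta>"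
proof -
  let ?z = "(two_quitter_profile i j \<delta> \<eta>)(i := y)"
  have z: "is_profile N ?z" by (rule is_profile_update[OF two_quitter_is_profile y])
  have z_ij: "?z i t = y t" "?z j t = \<eta>" for t using ij by (auto simp: two_quitter_profile_def)
  show ?thesis
  proof (rule payoff_le_if_stage_payoff_le[OF valid z i])
    show "no_quit_before N ?z \<longlonglongrightarrow> 0"
      by (rule no_quit_before_tendsto_zero[OF z j \<eta>_pos]) (simp add: z_ij del: fun_upd_apply)
    fix t
    have "quit_prob ?z (players N - {i, j}) t \<le> 0"
      using two_quitter_quit_prob_le[of "players N - {i, j}" t] by simp
    moreover have "quit_exactly N ?z {j} t * r {j} i \<le> 0"
      using quit_exactly_nonneg[OF z, of "{j}" t] j r_ji by (simp add: mult_nonneg_nonpos)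
    moreover have "y t * \<eta> \<le> \<eta> * quit_prob ?z (players N) t"
      using le_quit_prob[OF z order_refl i, of t] \<eta>_pos by (simp add: z_ij mult.commute)
    ultimately show "stage_payoff N r ?z i t \<le> \<eta> * quit_prob ?z (players N) t"
      using stage_payoff_le[OF valid z i i j ij, of t] r_ii
      by (simp add: z_ij del: fun_upd_apply)
  qed
qed

lemma two_quitter_deviation_payoff_le:
  assumes m: "m \<in> players N" "m \<noteq> i" and r_mm: "r {m} m = 0" and r_im: "0 \<le> r {i} m"
    and y: "is_strategy y"
  shows "payoff N r ((two_quitter_profile i j \<delta> \<eta>)(m := y)) m \<le> r {i} m + \<delta> + \<eta> / \<delta>"
proof -
  let ?z = "(two_quitter_profile i j \<delta> \<eta>)(m := y)"
  have z: "is_profile N ?z" by (rule is_profile_update[OF two_quitter_is_profile y])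
  have z_im: "?z i t = \<delta>" "?z m t = y t" for t using m by (auto simp: two_quitter_profile_def)
  have \<delta>_pos: "0 < \<delta>" using \<eta>_pos \<eta>_le_\<delta> by linarith
  show ?thesis
  proof (rule payoff_le_if_stage_payoff_le[OF valid z m(1)])
    show "no_quit_before N ?z \<longlonglongrightarrow> 0"
      by (rule no_quit_before_tendsto_zero[OF z i \<delta>_pos]) (simp add: z_im del: fun_upd_apply)
    fix t
    let ?q = "quit_prob ?z (players N) t"
    have "quit_exactly N ?z {i} t = ?q - quit_prob ?z (players N - {i}) t"
      using quit_prob_minus_single[OF i, of ?z t] by linarith
    then have "quit_exactly N ?z {i} t * r {i} m \<le> ?q * r {i} m"
      using quit_prob_nonneg[OF z, of "players N - {i}" t] r_im by (auto intro: mult_right_mono)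
    moreover have "quit_prob ?z (players N - {i, m}) t \<le> \<eta> / \<delta> * ?q"
    proof -
      have "quit_prob ?z (players N - {i, m}) t \<le> \<eta>"
        using two_quitter_quit_prob_le[of "players N - {i, m}" t] \<eta>_pos
        by (simp split: if_splits)
      moreover have "\<delta> \<le> ?q"
        using le_quit_prob[OF z order_refl i, of t] by (simp add: z_im del: fun_upd_apply)
      then have "\<eta> \<le> \<eta> / \<delta> * ?q" using \<delta>_pos \<eta>_pos by (simp add: field_simps)
      ultimately show ?thesis by linarith
    qed
    moreover have "\<delta> * y t \<le> \<delta> * ?q"
      using le_quit_prob[OF z order_refl m(1), of t] \<delta>_pos
      by (simp add: z_im del: fun_upd_apply)
    moreover have "(r {i} m + \<delta> + \<eta> / \<delta>) * ?q
        = ?q * r {i} m + \<delta> * ?q + \<eta> / \<delta> * ?q"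
      by (simp add: algebra_simps)
    ultimately show "stage_payoff N r ?z m t \<le> (r {i} m + \<delta> + \<eta> / \<delta>) * ?q"
      using stage_payoff_le[OF valid z m(1) i m(1) m(2)[symmetric], of t, unfolded z_im r_mm]
      by linarith
  qed
qed

end

theorem lemma1:
  fixes N :: nat and r :: "nat set \<Rightarrow> nat \<Rightarrow> real"
  assumes "valid_game N r"
    and "\<forall>i\<in>players N. r {i} i = 0"
    and "\<exists>i\<in>normal_players N r. \<forall>k\<in>players N. r {i} k \<ge> 0"
  shows "\<forall>\<epsilon>>0. \<exists>x. stationary_profile N x \<and> eps_equilibrium N r \<epsilon> x"
proof (intro allI impI)
  fix \<epsilon> :: real assume "\<epsilon> > 0"
  obtain i where "i \<in> normal_players N r" and r_i: "\<forall>k\<in>players N. 0 \<le> r {i} k"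
    using assms(3) by blast
  then have "i \<in> normal_iter N r (Suc 0)" unfolding normal_players_def by blast
  then obtain j where i: "i \<in> players N" and j: "j \<in> players N" "i \<noteq> j"
    and r_ji: "r {j} i \<le> 0"
    by auto
  define \<delta> where "\<delta> = min 1 (\<epsilon> / 2)"
  define c where "c = min 1 \<epsilon> / 8"
  define \<eta> where "\<eta> = \<delta> * c"
  have \<delta>: "0 < \<delta>" "\<delta> \<le> 1" "\<delta> \<le> \<epsilon> / 2" using \<open>\<epsilon> > 0\<close> by (auto simp: \<delta>_def)
  have c: "0 < c" "c \<le> 1" "c \<le> \<epsilon> / 8" using \<open>\<epsilon> > 0\<close> by (auto simp: c_def)
  have \<eta>: "0 < \<eta>" "\<eta> \<le> \<delta>" "\<eta> / \<delta> \<le> \<epsilon> / 8"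
    using \<delta> c by (auto simp: \<eta>_def mult_left_le)
  let ?x = "two_quitter_profile i j \<delta> \<eta>"
  note profile_facts = assms(1) i j \<eta>(1,2) \<delta>(2)
  have "eps_equilibrium N r \<epsilon> ?x"
    unfolding eps_equilibrium_def
  proof (intro conjI ballI allI impI)
    show "is_profile N ?x" by (rule two_quitter_is_profile[OF profile_facts])
    fix m y assume m: "m \<in> players N" and y: "is_strategy y"
    have "r {i} m - 2 * \<eta> / \<delta> \<le> payoff N r ?x m"
      using two_quitter_payoff_ge[OF profile_facts m] r_i m by blast
    moreover have
      "payoff N r (?x(m := y)) m \<le> (if m = i then \<eta> else r {i} m + \<delta> + \<eta> / \<delta>)"
      using two_quitter_deviation_payoff_le_self[OF profile_facts _ r_ji y]
        two_quitter_deviation_payoff_le[OF profile_facts m _ _ _ y] assms(2) r_i m i by auto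
    ultimately show "payoff N r (?x(m := y)) m - \<epsilon> \<le> payoff N r ?x m"
      using \<delta> \<eta> assms(2) i times_divide_eq_right[of 2 \<eta> \<delta>] by (auto split: if_splits)
  qed
  moreover have "stationary_profile N ?x"
    by (simp add: stationary_profile_def two_quitter_profile_def)
  ultimately show "\<exists>x. stationary_profile N x \<and> eps_equilibrium N r \<epsilon> x" by blast
qed

end
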